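(* Let $G=(V,E)$ be a connected graph with at least two vertices and let $v\in\mathrm{core}(G)$. Let $C_1,\ldots,C_k$ be the connected components of $G-N[v]$, and for $1\le i\le k$ let $N_i$ be the set of neighbors of $v$ having at least one neighbor in $C_i$. If $N_i$ induces a clique in $G$ for every $i\in\{1,\ldots,k\}$, then $\gamma(G-v)>\gamma(G)$, i.e. $v\in V^+$.
   Context: All graphs are finite, simple and undirected. $N[v]$ is the closed neighborhood of $v$; $G-X$ denotes the subgraph induced by $V\setminus X$, and $G-v=G-\{v\}$. $\gamma(G)$ is the domination number; a minimum dominating set (mds) is a dominating set of size $\gamma(G)$; $\mathrm{core}(G)$ is the set of vertices in every mds. $V^+=\{v\in V:\gamma(G-v)>\gamma(G)\}$. *)

theory Defs
  imports Main
begin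

definition simple_graph :: "'a set \<Rightarrow> ('a \<Rightarrow> 'a \<Rightarrow> bool) \<Rightarrow> bool" where
  "simple_graph V E \<longleftrightarrow> finite V \<and> (\<forall>x y. E x y \<longrightarrow> x \<in> V \<and> y \<in> V)
     \<and> (\<forall>x y. E x y \<longrightarrow> E y x) \<and> (\<forall>x. \<not> E x x)"

definition induced :: "'a set \<Rightarrow> ('a \<Rightarrow> 'a \<Rightarrow> bool) \<Rightarrow> 'a \<Rightarrow> 'a \<Rightarrow> bool" where
  "induced W E x y \<longleftrightarrow> x \<in> W \<and> y \<in> W \<and> E x y"

definition connected_graph :: "'a set \<Rightarrow> ('a \<Rightarrow> 'a \<Rightarrow> bool) \<Rightarrow> bool" where
  "connected_graph V E \<longleftrightarrow> (\<forall>x\<in>V. \<forall>y\<in>V. (induced V E)\<^sup>*\<^sup>* x y)"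

definition closed_nbhd :: "'a set \<Rightarrow> ('a \<Rightarrow> 'a \<Rightarrow> bool) \<Rightarrow> 'a \<Rightarrow> 'a set" where
  "closed_nbhd V E v = {v} \<union> {u \<in> V. E v u}"

text \<open>D dominates the subgraph induced on W.\<close>
definition dominating :: "'a set \<Rightarrow> ('a \<Rightarrow> 'a \<Rightarrow> bool) \<Rightarrow> 'a set \<Rightarrow> bool" where
  "dominating W E D \<longleftrightarrow> D \<subseteq> W \<and> (\<forall>w\<in>W. w \<in> D \<or> (\<exists>d\<in>D. E w d))"

definition domination_number :: "'a set \<Rightarrow> ('a \<Rightarrow> 'a \<Rightarrow> bool) \<Rightarrow> nat" where
  "domination_number W E = (LEAST n. \<exists>D. dominating W E D \<and> card D = n)"

definition min_dominating :: "'a set \<Rightarrow> ('a \<Rightarrow> 'a \<Rightarrow> bool) \<Rightarrow> 'a set \<Rightarrow> bool" where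
  "min_dominating W E D \<longleftrightarrow> dominating W E D \<and> card D = domination_number W E"

definition core :: "'a set \<Rightarrow> ('a \<Rightarrow> 'a \<Rightarrow> bool) \<Rightarrow> 'a set" where
  "core V E = {v \<in> V. \<forall>D. min_dominating V E D \<longrightarrow> v \<in> D}"

definition components :: "'a set \<Rightarrow> ('a \<Rightarrow> 'a \<Rightarrow> bool) \<Rightarrow> 'a set set" where
  "components W E = {{y \<in> W. (induced W E)\<^sup>*\<^sup>* x y} | x. x \<in> W}"

definition is_clique :: "('a \<Rightarrow> 'a \<Rightarrow> bool) \<Rightarrow> 'a set \<Rightarrow> bool" where
  "is_clique E S \<longleftrightarrow> (\<forall>a\<in>S. \<forall>b\<in>S. a \<noteq> b \<longrightarrow> E a b)"

end

theory Submission
  imports Defs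
begin

text \<open>
  Suppose \<open>\<gamma>(G - v) \<le> \<gamma>(G)\<close> and take minimum dominating sets \<open>S\<close> of \<open>G - v\<close> and \<open>D\<close> of \<open>G\<close>.
  Since \<open>v\<close> lies in every minimum dominating set of \<open>G\<close>, \<open>S\<close> contains no neighbour of \<open>v\<close>, so \<open>S\<close>
  lives in \<open>G - N[v]\<close> and \<open>v \<in> D\<close>. Call a component \<open>C\<close> of \<open>G - N[v]\<close> untouched if \<open>D\<close> meets
  no vertex of its attachment clique \<open>N\<^sub>C\<close>; then \<open>D\<close> dominates \<open>C\<close> from inside \<open>C\<close>.
  If some untouched \<open>C\<close> has \<open>|D \<inter> C| < |S \<inter> C|\<close>, replace \<open>S \<inter> C\<close> by \<open>D \<inter> C\<close> plus one vertex of
  \<open>N\<^sub>C\<close>. Otherwise replace \<open>D\<close> on the union of the untouched components by \<open>S\<close> and \<open>v\<close> by any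
  neighbour of \<open>v\<close>. The clique condition makes each new set dominate \<open>G\<close>; it avoids \<open>v\<close> and is
  no larger than \<open>\<gamma>(G)\<close>, contradicting \<open>v \<in> core(G)\<close>.
\<close>

definition component_of :: "'a set \<Rightarrow> ('a \<Rightarrow> 'a \<Rightarrow> bool) \<Rightarrow> 'a \<Rightarrow> 'a set" where
  "component_of W E x = {y \<in> W. (induced W E)\<^sup>*\<^sup>* x y}"

lemma components_eq_image_component_of: "components W E = component_of W E ` W"
  unfolding components_def component_of_def by auto

lemma mem_component_of_self: "x \<in> W \<Longrightarrow> x \<in> component_of W E x"
  unfolding component_of_def by auto

lemma component_of_mem_components: "x \<in> W \<Longrightarrow> component_of W E x \<in> components W E"
  by (simp add: components_eq_image_component_of)

lemma components_subset: "C \<in> components W E \<Longrightarrow> C \<subseteq> W"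
  unfolding components_def by auto

lemma components_edge_closed:
  assumes "C \<in> components W E" "x \<in> C" "y \<in> W" "E x y"
  shows "y \<in> C"
proof -
  obtain c where c: "C = component_of W E c"
    using assms(1) by (auto simp: components_eq_image_component_of)
  then have "(induced W E)\<^sup>*\<^sup>* c x" "x \<in> W"
    using assms(2) by (auto simp: component_of_def)
  moreover have "induced W E x y"
    using assms(3,4) \<open>x \<in> W\<close> by (simp add: induced_def)
  ultimately show ?thesis
    using c assms(3) by (auto simp: component_of_def intro: rtranclp.rtrancl_into_rtrancl)
qed

lemma domination_number_le_card: "dominating W E D \<Longrightarrow> domination_number W E \<le> card D"
  unfolding domination_number_def by (rule Least_le) blast

lemma min_dominating_exists: "\<exists>D. min_dominating W E D"
proof -
  have "dominating W E W"
    by (simp add: dominating_def)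
  have "\<exists>D. dominating W E D \<and> card D = domination_number W E"
    unfolding domination_number_def by (rule LeastI_ex) (use \<open>dominating W E W\<close> in blast)
  then show ?thesis
    by (simp add: min_dominating_def)
qed

lemma core_dominating_avoiding_card_gt:
  assumes "v \<in> core V E" "dominating V E Z" "v \<notin> Z"
  shows "domination_number V E < card Z"
proof (rule ccontr)
  assume "\<not> domination_number V E < card Z"
  then have "min_dominating V E Z"
    using assms(2) domination_number_le_card[OF assms(2)] by (simp add: min_dominating_def)
  then show False
    using assms(1,3) by (simp add: core_def)
qed

lemma card_Un_Un_singleton_le: "card (A \<union> B \<union> {w}) \<le> card A + card B + 1"
proof -
  have "card (A \<union> B \<union> {w}) \<le> card (A \<union> B) + 1"
    using card_Un_le[of "A \<union> B" "{w}"] by simp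
  then show ?thesis
    using card_Un_le[of A B] by linarith
qed

lemma card_swap_part_le:
  assumes "finite S" "card (D \<inter> C) < card (S \<inter> C)"
  shows "card ((S - C) \<union> (D \<inter> C) \<union> {w}) \<le> card S"
proof -
  have "card ((S - C) \<union> (D \<inter> C) \<union> {w}) \<le> card (S - C) + card (D \<inter> C) + 1"
    by (rule card_Un_Un_singleton_le)
  also have "\<dots> \<le> card (S - C) + card (S \<inter> C)"
    using assms(2) by simp
  also have "\<dots> = card S"
    using card_Int_Diff[OF assms(1), of C] by simp
  finally show ?thesis .
qed

lemma card_swap_vertex_le:
  assumes "finite D" "v \<in> D" "v \<notin> U" "card (S \<inter> U) \<le> card (D \<inter> U)"
  shows "card ((S \<inter> U) \<union> (D - {v} - U) \<union> {w}) \<le> card D"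
proof -
  have "D - {v} - U = (D - U) - {v}" "v \<in> D - U"
    using assms(2,3) by blast+
  then have "card (D - {v} - U) + 1 = card (D - U)"
    using assms(1) card_Suc_Diff1[of "D - U" v] by simp
  moreover have "card D = card (D \<inter> U) + card (D - U)"
    using card_Int_Diff[OF assms(1)] .
  ultimately show ?thesis
    using card_Un_Un_singleton_le[of "S \<inter> U" "D - {v} - U" w] assms(4) by linarith
qed

locale sgraph =
  fixes V :: "'a set" and E :: "'a \<Rightarrow> 'a \<Rightarrow> bool"
  assumes simple: "simple_graph V E"
begin

lemma finite_V: "finite V"
  and edge_in_V: "E x y \<Longrightarrow> x \<in> V \<and> y \<in> V"
  and edge_sym: "E x y \<Longrightarrow> E y x"
  and edge_irrefl: "\<not> E x x"
  using simple by (auto simp: simple_graph_def)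

lemma induced_rtranclp_sym:
  assumes "(induced W E)\<^sup>*\<^sup>* x y"
  shows "(induced W E)\<^sup>*\<^sup>* y x"
  using assms
proof (induction rule: rtranclp_induct)
  case (step y z)
  then have "induced W E z y"
    by (auto simp: induced_def edge_sym)
  then show ?case
    using step.IH by (rule converse_rtranclp_into_rtranclp)
qed simp

lemma components_eq_component_of:
  assumes "C \<in> components W E" "x \<in> C"
  shows "C = component_of W E x"
proof -
  obtain c where c: "C = component_of W E c"
    using assms(1) by (auto simp: components_eq_image_component_of)
  then have "(induced W E)\<^sup>*\<^sup>* c x" "(induced W E)\<^sup>*\<^sup>* x c"
    using assms(2) induced_rtranclp_sym by (auto simp: component_of_def)
  then show ?thesis
    using c by (auto simp: component_of_def intro: rtranclp_trans)
qed

lemma components_disjoint: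
  assumes "C \<in> components W E" "C' \<in> components W E" "C \<noteq> C'"
  shows "C \<inter> C' = {}"
proof (rule ccontr)
  assume "C \<inter> C' \<noteq> {}"
  then obtain x where "x \<in> C" "x \<in> C'"
    by blast
  then have "C = C'"
    using components_eq_component_of[OF assms(1) \<open>x \<in> C\<close>]
      components_eq_component_of[OF assms(2) \<open>x \<in> C'\<close>]
    by simp
  with assms(3) show False
    by contradiction
qed

lemma card_Int_Union_components:
  assumes "finite W" "finite X" "J \<subseteq> components W E"
  shows "card (X \<inter> \<Union>J) = (\<Sum>C\<in>J. card (X \<inter> C))"
proof -
  have "finite (components W E)"
    using assms(1) by (simp add: components_eq_image_component_of)
  then have finite_J: "finite J"
    using assms(3) by (rule finite_subset[rotated])
  have disjoint: "\<forall>C\<in>J. \<forall>C'\<in>J. C \<noteq> C' \<longrightarrow> (X \<inter> C) \<inter> (X \<inter> C') = {}"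
  proof (intro ballI impI)
    fix C C' assume "C \<in> J" "C' \<in> J" "C \<noteq> C'"
    then have "C \<inter> C' = {}"
      using assms(3) components_disjoint by blast
    then show "(X \<inter> C) \<inter> (X \<inter> C') = {}"
      by blast
  qed
  have "X \<inter> \<Union>J = (\<Union>C\<in>J. X \<inter> C)"
    by blast
  moreover have "card (\<Union>C\<in>J. X \<inter> C) = (\<Sum>C\<in>J. card (X \<inter> C))"
    using assms(2) finite_J disjoint by (intro card_UN_disjoint) blast+
  ultimately show ?thesis
    by (simp only:)
qed

abbreviation non_nbhd :: "'a \<Rightarrow> 'a set" where
  "non_nbhd v \<equiv> V - closed_nbhd V E v"

definition attachments :: "'a \<Rightarrow> 'a set \<Rightarrow> 'a set" where
  "attachments v C = {u \<in> V. E v u \<and> (\<exists>c\<in>C. E u c)}"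

lemma attachments_nbhd: "u \<in> attachments v C \<Longrightarrow> E v u"
  by (simp add: attachments_def)

lemma non_nbhd_Int_attachments: "non_nbhd v \<inter> attachments v C = {}"
  by (auto simp: attachments_def closed_nbhd_def)

lemma vertex_trichotomy:
  assumes "x \<in> V"
  obtains "x = v" | "E v x" | "x \<in> non_nbhd v"
  using assms by (auto simp: closed_nbhd_def)

lemma neighbour_of_non_nbhd_component:
  assumes C: "C \<in> components (non_nbhd v) E" and "x \<in> C" "E x d"
  shows "d \<in> C \<or> d \<in> attachments v C"
proof -
  have "x \<in> non_nbhd v"
    using assms(2) components_subset[OF C] by blast
  then have "\<not> E v x"
    by (simp add: closed_nbhd_def)
  then have "d \<noteq> v"
    using assms(3) edge_sym by blast
  moreover have "d \<in> V" "E d x"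
    using assms(3) edge_in_V edge_sym by auto
  ultimately have "E v d \<or> d \<in> non_nbhd v"
    by (auto simp: closed_nbhd_def)
  then show ?thesis
    using components_edge_closed[OF C assms(2) _ assms(3)] assms(2) \<open>d \<in> V\<close> \<open>E d x\<close>
    by (auto simp: attachments_def)
qed

lemma dominator_in_component:
  assumes X: "dominating W E X" "X \<inter> attachments v C = {}"
    and C: "C \<in> components (non_nbhd v) E" "C \<subseteq> W" and x: "x \<in> C"
  obtains y where "y \<in> X \<inter> C" "y = x \<or> E x y"
proof -
  have "x \<in> X \<or> (\<exists>y\<in>X. E x y)"
    using X(1) C(2) x by (auto simp: dominating_def)
  then show ?thesis
  proof
    assume "\<exists>y\<in>X. E x y"
    then obtain y where "y \<in> X" "E x y"
      by blast
    then have "y \<in> C"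
      using neighbour_of_non_nbhd_component[OF C(1) x] X(2) by blast
    then show ?thesis
      using that \<open>y \<in> X\<close> \<open>E x y\<close> by blast
  qed (use that x in blast)
qed

lemma nbhd_dominated_through_component:
  assumes S: "dominating (V - {v}) E S" "S \<subseteq> non_nbhd v" and x: "E v x"
  obtains C s where "C \<in> components (non_nbhd v) E" "s \<in> S \<inter> C" "E x s"
    "x \<in> attachments v C"
proof -
  have "x \<in> V - {v}" "x \<notin> S"
    using x S(2) edge_in_V edge_irrefl by (auto simp: closed_nbhd_def)
  then obtain s where s: "s \<in> S" "E x s"
    using S(1) by (auto simp: dominating_def)
  let ?C = "component_of (non_nbhd v) E s"
  have "s \<in> non_nbhd v"
    using s(1) S(2) by blast
  then have "?C \<in> components (non_nbhd v) E" "s \<in> ?C"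
    by (simp_all add: component_of_mem_components mem_component_of_self)
  moreover have "x \<in> attachments v ?C"
    using x s(2) \<open>s \<in> ?C\<close> \<open>x \<in> V - {v}\<close> by (auto simp: attachments_def)
  ultimately show ?thesis
    using that s by blast
qed

lemma dominating_delete_core_subset_non_nbhd:
  assumes "v \<in> core V E" "dominating (V - {v}) E S" "card S \<le> domination_number V E"
  shows "S \<subseteq> non_nbhd v"
proof
  fix s assume "s \<in> S"
  have "\<not> E v s"
  proof
    assume "E v s"
    then have "dominating V E S"
      using assms(2) \<open>s \<in> S\<close> edge_in_V by (auto simp: dominating_def)
    moreover have "v \<notin> S"
      using assms(2) by (auto simp: dominating_def)
    ultimately have "domination_number V E < card S"
      using core_dominating_avoiding_card_gt[OF assms(1)] by blast
    with assms(3) show False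
      by simp
  qed
  then show "s \<in> non_nbhd v"
    using assms(2) \<open>s \<in> S\<close> by (auto simp: dominating_def closed_nbhd_def)
qed

lemma exists_nbhd:
  assumes "connected_graph V E" "v \<in> V" "2 \<le> card V"
  obtains w where "E v w"
proof -
  have "\<not> V \<subseteq> {v}"
  proof
    assume "V \<subseteq> {v}"
    then have "card V \<le> 1"
      using card_mono[of "{v}" V] by simp
    with assms(3) show False
      by simp
  qed
  then obtain x where x: "x \<in> V" "x \<noteq> v"
    by blast
  then have "(induced V E)\<^sup>*\<^sup>* v x"
    using assms(1,2) by (simp add: connected_graph_def)
  then show ?thesis
    using x(2) that by (cases rule: converse_rtranclpE) (auto simp: induced_def)
qed

text \<open>A path in \<open>G\<close> from \<open>C\<close> to \<open>v\<close> must leave \<open>C\<close> through a vertex of \<open>N[v]\<close>.\<close>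
lemma attachments_nonempty:
  assumes "connected_graph V E" "v \<in> V" and C: "C \<in> components (non_nbhd v) E"
  shows "attachments v C \<noteq> {}"
proof
  assume no_att: "attachments v C = {}"
  obtain c where "c \<in> non_nbhd v" "C = component_of (non_nbhd v) E c"
    using C by (auto simp: components_eq_image_component_of)
  then have c: "c \<in> C"
    by (simp add: mem_component_of_self)
  have "y \<in> C" if "(induced V E)\<^sup>*\<^sup>* c y" for y
    using that
  proof (induction rule: rtranclp_induct)
    case (step y z)
    then show ?case
      using neighbour_of_non_nbhd_component[OF C step.IH] no_att by (auto simp: induced_def)
  qed (rule c)
  moreover have "(induced V E)\<^sup>*\<^sup>* c v"
    using assms(1,2) c components_subset[OF C] by (auto simp: connected_graph_def)
  ultimately have "v \<in> C"
    by blast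
  then show False
    using components_subset[OF C] by (auto simp: closed_nbhd_def)
qed

lemma dominating_swap_component:
  assumes S: "dominating (V - {v}) E S" "S \<subseteq> non_nbhd v"
    and D: "dominating V E D"
    and C: "C \<in> components (non_nbhd v) E" "D \<inter> attachments v C = {}"
      "is_clique E (attachments v C)"
    and w: "w \<in> attachments v C"
  shows "dominating V E ((S - C) \<union> (D \<inter> C) \<union> {w})" (is "dominating V E ?Z")
proof -
  have S_att: "S \<inter> attachments v C' = {}" for C'
    using S(2) non_nbhd_Int_attachments by blast
  have "x \<in> ?Z \<or> (\<exists>z\<in>?Z. E x z)" if x: "x \<in> V" for x
    using x
  proof (cases rule: vertex_trichotomy[where v = v])
    case 1
    then show ?thesis
      using attachments_nbhd[OF w] by blast
  next
    case 2
    then obtain C' s where C': "C' \<in> components (non_nbhd v) E" and s: "s \<in> S \<inter> C'" "E x s"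
      and x_att: "x \<in> attachments v C'"
      using nbhd_dominated_through_component[OF S] by blast
    show ?thesis
    proof (cases "C' = C")
      case True
      then have "x = w \<or> E x w"
        using C(3) w x_att by (auto simp: is_clique_def)
      then show ?thesis
        by blast
    next
      case False
      then have "s \<notin> C"
        using components_disjoint[OF C' C(1)] s(1) by blast
      then show ?thesis
        using s by blast
    qed
  next
    case 3
    let ?C' = "component_of (non_nbhd v) E x"
    have C': "?C' \<in> components (non_nbhd v) E" "x \<in> ?C'"
      using 3 by (simp_all add: component_of_mem_components mem_component_of_self)
    show ?thesis
    proof (cases "?C' = C")
      case True
      obtain y where "y \<in> D \<inter> C" "y = x \<or> E x y"
        using dominator_in_component[OF D C(2) C(1)] components_subset[OF C(1)] C'(2) True
        by blast
      then show ?thesis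
        by blast
    next
      case False
      obtain y where y: "y \<in> S \<inter> ?C'" "y = x \<or> E x y"
        using dominator_in_component[OF S(1) S_att C'(1) _ C'(2)] components_subset[OF C'(1)]
        by (auto simp: closed_nbhd_def)
      then have "y \<notin> C"
        using components_disjoint[OF C'(1) C(1) False] by blast
      then show ?thesis
        using y by blast
    qed
  qed
  moreover have "?Z \<subseteq> V"
    using S(1) D w by (auto simp: dominating_def attachments_def)
  ultimately show ?thesis
    by (simp add: dominating_def)
qed

lemma dominating_swap_untouched_components:
  assumes S: "dominating (V - {v}) E S" "S \<subseteq> non_nbhd v"
    and D: "dominating V E D"
    and cliques: "\<forall>C\<in>components (non_nbhd v) E. is_clique E (attachments v C)"
    and w: "E v w"
    and U: "U = \<Union>{C \<in> components (non_nbhd v) E. D \<inter> attachments v C = {}}"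
  shows "dominating V E ((S \<inter> U) \<union> (D - {v} - U) \<union> {w})" (is "dominating V E ?Z")
proof -
  have S_att: "S \<inter> attachments v C = {}" for C
    using S(2) non_nbhd_Int_attachments by blast
  have U_non_nbhd: "U \<subseteq> non_nbhd v"
    using U components_subset by blast
  have "x \<in> ?Z \<or> (\<exists>z\<in>?Z. E x z)" if x: "x \<in> V" for x
    using x
  proof (cases rule: vertex_trichotomy[where v = v])
    case 1
    then show ?thesis
      using w by blast
  next
    case 2
    then obtain C s where C: "C \<in> components (non_nbhd v) E" and s: "s \<in> S \<inter> C" "E x s"
      and x_att: "x \<in> attachments v C"
      using nbhd_dominated_through_component[OF S] by blast
    show ?thesis
    proof (cases "D \<inter> attachments v C = {}")
      case True
      then have "s \<in> S \<inter> U"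
        using U C s(1) by blast
      then show ?thesis
        using s(2) by blast
    next
      case False
      then obtain m where m: "m \<in> D" "m \<in> attachments v C"
        by blast
      then have "m \<in> D - {v} - U"
        using U_non_nbhd non_nbhd_Int_attachments attachments_nbhd[OF m(2)] edge_irrefl
        by blast
      moreover have "x = m \<or> E x m"
        using cliques C x_att m(2) by (auto simp: is_clique_def)
      ultimately show ?thesis
        by blast
    qed
  next
    case 3
    let ?C = "component_of (non_nbhd v) E x"
    have C: "?C \<in> components (non_nbhd v) E" "x \<in> ?C"
      using 3 by (simp_all add: component_of_mem_components mem_component_of_self)
    show ?thesis
    proof (cases "D \<inter> attachments v ?C = {}")
      case True
      obtain y where "y \<in> S \<inter> ?C" "y = x \<or> E x y"
        using dominator_in_component[OF S(1) S_att C(1) _ C(2)] components_subset[OF C(1)]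
        by (auto simp: closed_nbhd_def)
      moreover have "?C \<subseteq> U"
        using U C(1) True by blast
      ultimately show ?thesis
        by blast
    next
      case False
      have "?C \<inter> U = {}"
        using U C(1) False components_disjoint[OF C(1)] by blast
      obtain y where y: "y \<in> D" "y = x \<or> E x y"
        using D x by (auto simp: dominating_def)
      then have "y \<in> ?C \<or> y \<in> attachments v ?C"
        using neighbour_of_non_nbhd_component[OF C] C(2) by blast
      moreover have "v \<notin> non_nbhd v"
        by (simp add: closed_nbhd_def)
      ultimately have "y \<notin> U" "y \<noteq> v"
        using \<open>?C \<inter> U = {}\<close> U_non_nbhd non_nbhd_Int_attachments components_subset[OF C(1)]
          attachments_nbhd edge_irrefl
        by blast+
      then show ?thesis
        using y by blast
    qed
  qed
  moreover have "?Z \<subseteq> V"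
    using S(1) D w edge_in_V by (auto simp: dominating_def)
  ultimately show ?thesis
    by (simp add: dominating_def)
qed

lemma exists_dominating_avoiding:
  assumes "connected_graph V E" "v \<in> D"
    and S: "dominating (V - {v}) E S" "S \<subseteq> non_nbhd v"
    and D: "dominating V E D"
    and cliques: "\<forall>C\<in>components (non_nbhd v) E. is_clique E (attachments v C)"
    and w: "E v w"
  obtains Z where "dominating V E Z" "v \<notin> Z" "card Z \<le> max (card S) (card D)"
proof -
  have "finite S" "finite D" "v \<in> V"
    using S(1) D assms(2) finite_V finite_subset by (auto simp: dominating_def)
  have v_not_non_nbhd: "v \<notin> non_nbhd v"
    by (simp add: closed_nbhd_def)
  define J where "J = {C \<in> components (non_nbhd v) E. D \<inter> attachments v C = {}}"
  show ?thesis
  proof (cases "\<exists>C\<in>J. card (D \<inter> C) < card (S \<inter> C)")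
    case True
    then obtain C where C: "C \<in> components (non_nbhd v) E" "D \<inter> attachments v C = {}"
      "card (D \<inter> C) < card (S \<inter> C)"
      by (auto simp: J_def)
    then obtain w' where w': "w' \<in> attachments v C"
      using attachments_nonempty[OF assms(1) \<open>v \<in> V\<close>] by blast
    let ?Z = "(S - C) \<union> (D \<inter> C) \<union> {w'}"
    have "dominating V E ?Z"
      using dominating_swap_component[OF S D C(1,2)] cliques C(1) w' by blast
    moreover have "v \<notin> ?Z"
      using S(2) components_subset[OF C(1)] v_not_non_nbhd attachments_nbhd[OF w'] edge_irrefl
      by blast
    moreover have "card ?Z \<le> card S"
      using card_swap_part_le[OF \<open>finite S\<close> C(3)] .
    ultimately show ?thesis
      using that by (meson max.coboundedI1)
  next
    case False
    let ?U = "\<Union>J"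
    let ?Z = "(S \<inter> ?U) \<union> (D - {v} - ?U) \<union> {w}"
    have "dominating V E ?Z"
      using dominating_swap_untouched_components[OF S D cliques w] by (simp add: J_def)
    moreover have "v \<notin> ?Z"
      using S(2) v_not_non_nbhd edge_irrefl w by blast
    moreover have "card ?Z \<le> card D"
    proof (rule card_swap_vertex_le[OF \<open>finite D\<close> assms(2)])
      show "v \<notin> ?U"
        using components_subset v_not_non_nbhd by (auto simp: J_def)
      have "J \<subseteq> components (non_nbhd v) E"
        by (auto simp: J_def)
      then have "card (X \<inter> ?U) = (\<Sum>C\<in>J. card (X \<inter> C))" if "finite X" for X
        using card_Int_Union_components finite_V that by blast
      then show "card (S \<inter> ?U) \<le> card (D \<inter> ?U)"
        using False \<open>finite S\<close> \<open>finite D\<close> by (simp add: sum_mono not_less)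
    qed
    ultimately show ?thesis
      using that by (meson max.coboundedI2)
  qed
qed

end

theorem lemma3:
  fixes V :: "'a set" and E :: "'a \<Rightarrow> 'a \<Rightarrow> bool" and v :: 'a
  assumes "simple_graph V E"
    and "connected_graph V E"
    and "card V \<ge> 2"
    and "v \<in> core V E"
    and "\<forall>C \<in> components (V - closed_nbhd V E v) E.
           is_clique E {u \<in> V. E v u \<and> (\<exists>c\<in>C. E u c)}"
  shows "domination_number (V - {v}) E > domination_number V E"
proof (rule ccontr)
  interpret sgraph V E
    by (rule sgraph.intro) fact
  assume "\<not> domination_number (V - {v}) E > domination_number V E"
  moreover obtain S where "min_dominating (V - {v}) E S"
    using min_dominating_exists by blast
  ultimately have S: "dominating (V - {v}) E S" "card S \<le> domination_number V E"
    by (simp_all add: min_dominating_def)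
  obtain D where D: "min_dominating V E D"
    using min_dominating_exists by blast
  have "v \<in> D" "v \<in> V"
    using assms(4) D by (auto simp: core_def)
  have "S \<subseteq> non_nbhd v"
    using dominating_delete_core_subset_non_nbhd[OF assms(4) S] .
  obtain w where "E v w"
    using exists_nbhd[OF assms(2) \<open>v \<in> V\<close> assms(3)] .
  moreover have "\<forall>C\<in>components (non_nbhd v) E. is_clique E (attachments v C)"
    using assms(5) by (simp add: attachments_def)
  ultimately obtain Z where "dominating V E Z" "v \<notin> Z" "card Z \<le> max (card S) (card D)"
    using exists_dominating_avoiding[OF assms(2) \<open>v \<in> D\<close> S(1) \<open>S \<subseteq> non_nbhd v\<close>] D
    by (auto simp: min_dominating_def)
  moreover have "max (card S) (card D) \<le> domination_number V E"
    using S(2) D by (simp add: min_dominating_def)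
  ultimately show False
    using core_dominating_avoiding_card_gt[OF assms(4)] by fastforce
qed

end
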